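(* Let $\widetilde{T_k},\widetilde{S_k}\in J(Z)$ ($k=1,\dots,m$) be any polynomials whose images under the canonical homomorphism $J(Z)\to J(B_m)$ are $T_k$ and $S_k$ respectively. Consider the set $\mathcal P$ of polynomials $$x_1^{k_0}(\widetilde{S_m})^{\delta_m}\cdots(\widetilde{S_1})^{\delta_1}(\widetilde{T_m})^{k_m}\cdots(\widetilde{T_1})^{k_1},$$ (with any fixed arrangement of parentheses) where $k_0,\dots,k_m\ge0$, $\delta_l\in\{0,1\}$ and $\delta_l\ne0$ for at most one $l\in\{1,\dots,m\}$. Then for every subset $S\subseteq\mathcal P$ there is a finite subset $\widehat S\subseteq S$ such that every polynomial in $S$ is a consequence of $\widehat S\cup\mathrm{Id}_2(B_m)$, i.e. belongs to the $T_2$-ideal of $J(Z)$ generated by $\widehat S\cup \mathrm{Id}_2(B_m)$.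
   Context: $K$ is a field of characteristic zero, $m>1$, and $B_m=K\oplus V$ is the Jordan algebra of a nondegenerate symmetric bilinear form $f$ on an $m$-dimensional space $V$, with product $(\alpha+u)(\beta+v)=(\alpha\beta+f(u,v))+(\alpha v+\beta u)$ and grading $(B_m)_0=K$, $(B_m)_1=V$. $J(Z)$ is the free Jordan algebra on even variables $x_1,x_2,\dots$ and odd variables $y_1,y_2,\dots$, graded by parity of the number of $y$'s; $\mathrm{Id}_2(B_m)$ is the ideal of graded identities of $B_m$ (polynomials vanishing under all substitutions of $x$'s by elements of $K$ and $y$'s by elements of $V$); a $T_2$-ideal is an ideal of $J(Z)$ invariant under all grading-preserving endomorphisms; $J(B_m)=J(Z)/\mathrm{Id}_2(B_m)$. In $J(B_m)$: $T_j=\det(y_ay_b)_{a,b=1}^j$ and $S_j=\sum_{\sigma\in S_j}(-1)^\sigma y_{\sigma(1)}(y_1y_{\sigma(2)})\cdots(y_{j-1}y_{\sigma(j)})$, products of several factors being independent of bracketing in $J(B_m)$. $x_1^{0}$ and zero exponents mean the factor is omitted. *)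

theory Defs
  imports "HOL-Combinatorics.Permutations"
begin

text \<open>Xv i is the even variable x_i, Yv i the odd variable y_i (i >= 1 is the intended range).\<close>
datatype 'k expr =
    Xv nat | Yv nat | Zr | Add "'k expr" "'k expr" | Smul 'k "'k expr" | Mult "'k expr" "'k expr"

text \<open>Syntactic homogeneity: hom e p means e is homogeneous of parity p (True = odd).\<close>
inductive hom :: "'k expr \<Rightarrow> bool \<Rightarrow> bool" where
  "hom (Xv i) False"
| "hom (Yv i) True"
| "hom Zr p"
| "hom a p \<Longrightarrow> hom b p \<Longrightarrow> hom (Add a b) p"
| "hom a p \<Longrightarrow> hom (Smul c a) p"
| "hom a p \<Longrightarrow> hom b q \<Longrightarrow> hom (Mult a b) (p \<noteq> q)"

fun subst :: "(nat \<Rightarrow> 'k expr) \<Rightarrow> (nat \<Rightarrow> 'k expr) \<Rightarrow> 'k expr \<Rightarrow> 'k expr" where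
  "subst sx sy (Xv i) = sx i"
| "subst sx sy (Yv i) = sy i"
| "subst sx sy Zr = Zr"
| "subst sx sy (Add a b) = Add (subst sx sy a) (subst sx sy b)"
| "subst sx sy (Smul c a) = Smul c (subst sx sy a)"
| "subst sx sy (Mult a b) = Mult (subst sx sy a) (subst sx sy b)"

text \<open>V = K^m, realised as functions nat => 'k vanishing outside {..<m};
  the bilinear form f has Gram matrix F on {..<m}.\<close>
definition Vsp :: "nat \<Rightarrow> (nat \<Rightarrow> 'k::field) set" where
  "Vsp m = {v. \<forall>i\<ge>m. v i = 0}"

definition bform :: "nat \<Rightarrow> (nat \<Rightarrow> nat \<Rightarrow> 'k::field) \<Rightarrow> (nat \<Rightarrow> 'k) \<Rightarrow> (nat \<Rightarrow> 'k) \<Rightarrow> 'k" where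
  "bform m F u v = (\<Sum>i<m. \<Sum>j<m. u i * F i j * v j)"

definition nondeg_symm :: "nat \<Rightarrow> (nat \<Rightarrow> nat \<Rightarrow> 'k::field) \<Rightarrow> bool" where
  "nondeg_symm m F \<longleftrightarrow> (\<forall>i<m. \<forall>j<m. F i j = F j i) \<and>
     (\<forall>u\<in>Vsp m. (\<forall>w\<in>Vsp m. bform m F u w = 0) \<longrightarrow> u = (\<lambda>_. 0))"

text \<open>Elements of B_m: pairs (alpha, u) with alpha in K, u in V.\<close>
definition Bmult :: "nat \<Rightarrow> (nat \<Rightarrow> nat \<Rightarrow> 'k::field) \<Rightarrow> 'k \<times> (nat \<Rightarrow> 'k) \<Rightarrow> 'k \<times> (nat \<Rightarrow> 'k) \<Rightarrow> 'k \<times> (nat \<Rightarrow> 'k)" where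
  "Bmult m F p q = (fst p * fst q + bform m F (snd p) (snd q),
                    (\<lambda>i. fst p * snd q i + fst q * snd p i))"

fun evalB :: "nat \<Rightarrow> (nat \<Rightarrow> nat \<Rightarrow> 'k::field) \<Rightarrow> (nat \<Rightarrow> 'k) \<Rightarrow> (nat \<Rightarrow> nat \<Rightarrow> 'k)
              \<Rightarrow> 'k expr \<Rightarrow> 'k \<times> (nat \<Rightarrow> 'k)" where
  "evalB m F a v (Xv i) = (a i, (\<lambda>_. 0))"
| "evalB m F a v (Yv i) = (0, v i)"
| "evalB m F a v Zr = (0, (\<lambda>_. 0))"
| "evalB m F a v (Add e1 e2) =
     (let p = evalB m F a v e1; q = evalB m F a v e2 in (fst p + fst q, (\<lambda>i. snd p i + snd q i)))"
| "evalB m F a v (Smul c e) = (let p = evalB m F a v e in (c * fst p, (\<lambda>i. c * snd p i)))"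
| "evalB m F a v (Mult e1 e2) = Bmult m F (evalB m F a v e1) (evalB m F a v e2)"

text \<open>Graded identities Id_2(B_m): x's range over K, y's over V.\<close>
definition Id2 :: "nat \<Rightarrow> (nat \<Rightarrow> nat \<Rightarrow> 'k::field) \<Rightarrow> 'k expr set" where
  "Id2 m F = {e. \<forall>a v. (\<forall>i. v i \<in> Vsp m) \<longrightarrow> evalB m F a v e = (0, (\<lambda>_. 0))}"

text \<open>Preimage in expressions of the T_2-ideal of J(Z) generated by G \<union> Id_2(B_m).\<close>
inductive_set T2cons :: "nat \<Rightarrow> (nat \<Rightarrow> nat \<Rightarrow> 'k::field) \<Rightarrow> 'k expr set \<Rightarrow> 'k expr set"
  for m F G where
  id2: "e \<in> Id2 m F \<Longrightarrow> e \<in> T2cons m F G"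
| gen: "g \<in> G \<Longrightarrow> (\<forall>i. hom (sx i) False) \<Longrightarrow> (\<forall>i. hom (sy i) True) \<Longrightarrow>
        subst sx sy g \<in> T2cons m F G"
| add: "a \<in> T2cons m F G \<Longrightarrow> b \<in> T2cons m F G \<Longrightarrow> Add a b \<in> T2cons m F G"
| smul: "a \<in> T2cons m F G \<Longrightarrow> Smul c a \<in> T2cons m F G"
| multl: "a \<in> T2cons m F G \<Longrightarrow> Mult a b \<in> T2cons m F G"
| multr: "a \<in> T2cons m F G \<Longrightarrow> Mult b a \<in> T2cons m F G"
| resp: "a \<in> T2cons m F G \<Longrightarrow> Add b (Smul (-1) a) \<in> T2cons m F G \<Longrightarrow> b \<in> T2cons m F G"

definition Tval :: "nat \<Rightarrow> (nat \<Rightarrow> nat \<Rightarrow> 'k::field) \<Rightarrow> nat \<Rightarrow> (nat \<Rightarrow> nat \<Rightarrow> 'k) \<Rightarrow> 'k \<times> (nat \<Rightarrow> 'k)" where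
  "Tval m F k v = ((\<Sum>\<sigma>\<in>{\<sigma>. \<sigma> permutes {1..k}}.
       of_int (sign \<sigma>) * (\<Prod>a\<in>{1..k}. bform m F (v a) (v (\<sigma> a)))), (\<lambda>_. 0))"

definition Sval :: "nat \<Rightarrow> (nat \<Rightarrow> nat \<Rightarrow> 'k::field) \<Rightarrow> nat \<Rightarrow> (nat \<Rightarrow> nat \<Rightarrow> 'k) \<Rightarrow> 'k \<times> (nat \<Rightarrow> 'k)" where
  "Sval m F k v = (0, (\<lambda>i. \<Sum>\<sigma>\<in>{\<sigma>. \<sigma> permutes {1..k}}.
       of_int (sign \<sigma>) * (\<Prod>a\<in>{2..k}. bform m F (v (a - 1)) (v (\<sigma> a))) * v (\<sigma> 1) i))"

text \<open>"The image of p in J(B_m) is the element with value function val".\<close>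
definition represents :: "nat \<Rightarrow> (nat \<Rightarrow> nat \<Rightarrow> 'k::field) \<Rightarrow> 'k expr
     \<Rightarrow> ((nat \<Rightarrow> nat \<Rightarrow> 'k) \<Rightarrow> 'k \<times> (nat \<Rightarrow> 'k)) \<Rightarrow> bool" where
  "represents m F p val \<longleftrightarrow> (\<forall>a v. (\<forall>i. v i \<in> Vsp m) \<longrightarrow> evalB m F a v p = val v)"

datatype shape = Lf | Nd shape shape

fun leaves :: "shape \<Rightarrow> nat" where
  "leaves Lf = 1" | "leaves (Nd a b) = leaves a + leaves b"

fun fill :: "shape \<Rightarrow> 'k expr list \<Rightarrow> 'k expr \<times> 'k expr list" where
  "fill Lf [] = (Zr, [])"
| "fill Lf (e # es) = (e, es)"
| "fill (Nd a b) es = (let (x, r) = fill a es; (y, r') = fill b r in (Mult x y, r'))"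

definition bracket :: "shape \<Rightarrow> 'k expr list \<Rightarrow> 'k expr" where
  "bracket sh es = fst (fill sh es)"

text \<open>Factor list of x_1^{k_0} S_d T_m^{k_m} ... T_1^{k_1}; ks = [k_0,...,k_m];
  d = 0 means all delta_l = 0, d = l in {1..m} means delta_l = 1.\<close>
definition factors :: "nat \<Rightarrow> (nat \<Rightarrow> 'k expr) \<Rightarrow> (nat \<Rightarrow> 'k expr) \<Rightarrow> nat list \<Rightarrow> nat \<Rightarrow> 'k expr list" where
  "factors m Tt St ks d =
     replicate (ks ! 0) (Xv 1) @ (if d \<ge> 1 then [St d] else []) @
     concat (map (\<lambda>l. replicate (ks ! l) (Tt l)) (rev [1..<m+1]))"

definition Pset :: "nat \<Rightarrow> (nat \<Rightarrow> 'k expr) \<Rightarrow> (nat \<Rightarrow> 'k expr) \<Rightarrow> (nat list \<times> nat \<Rightarrow> shape) \<Rightarrow> 'k expr set" where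
  "Pset m Tt St shp = {bracket (shp (ks, d)) (factors m Tt St ks d) | ks d.
       length ks = m + 1 \<and> d \<le> m \<and> factors m Tt St ks d \<noteq> []}"

end

theory Submission
  imports Defs
begin

text \<open>In B_m the elements x_1 and T_k take values in K, and a product in which at most one
  factor lies outside K does not depend on the bracketing and is commutative. Hence if the
  exponent vector of one element of P dominates that of another (with the same S-factor), the
  first equals the second multiplied by further copies of x_1 and T_k modulo Id_2(B_m), and so
  is a consequence of it. Dickson's lemma on N^(m+1) then yields the finite subset. Only this
  scalarity is used: the values of the S_l, nondegeneracy of f and m > 1 play no role.\<close>

text \<open>The product of B_m with the term f(u, v) dropped: it agrees with Bmult as soon as one
  factor lies in K, and unlike Bmult it is associative.\<close>

definition Bmult0 :: "'k::field \<times> (nat \<Rightarrow> 'k) \<Rightarrow> 'k \<times> (nat \<Rightarrow> 'k) \<Rightarrow> 'k \<times> (nat \<Rightarrow> 'k)" where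
  "Bmult0 p q = (fst p * fst q, (\<lambda>i. fst p * snd q i + fst q * snd p i))"

definition in_K :: "'k::zero \<times> (nat \<Rightarrow> 'k) \<Rightarrow> bool" where
  "in_K p \<longleftrightarrow> snd p = (\<lambda>_. 0)"

lemma Bmult0_assoc: "Bmult0 (Bmult0 p q) r = Bmult0 p (Bmult0 q r)"
  and Bmult0_commute: "Bmult0 p q = Bmult0 q p"
  and Bmult0_left_commute: "Bmult0 p (Bmult0 q r) = Bmult0 q (Bmult0 p r)"
  by (auto simp: Bmult0_def algebra_simps)

lemmas Bmult0_ac = Bmult0_assoc Bmult0_commute Bmult0_left_commute

lemma Bmult0_one_left [simp]: "Bmult0 (1, (\<lambda>_. 0)) p = p"
  by (simp add: Bmult0_def)

lemma Bmult0_one_right [simp]: "Bmult0 p (1, (\<lambda>_. 0)) = p"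
  by (simp add: Bmult0_def)

lemma Bmult_eq_Bmult0: "in_K p \<or> in_K q \<Longrightarrow> Bmult m F p q = Bmult0 p q"
  by (auto simp: Bmult_def Bmult0_def bform_def in_K_def)

fun Bprod0 :: "('k::field \<times> (nat \<Rightarrow> 'k)) list \<Rightarrow> 'k \<times> (nat \<Rightarrow> 'k)" where
  "Bprod0 [] = (1, (\<lambda>_. 0))"
| "Bprod0 (p # ps) = Bmult0 p (Bprod0 ps)"

lemma Bprod0_append: "Bprod0 (ps @ qs) = Bmult0 (Bprod0 ps) (Bprod0 qs)"
  by (induction ps) (auto simp: Bmult0_assoc)

lemma in_K_Bprod0: "\<forall>p\<in>set ps. in_K p \<Longrightarrow> in_K (Bprod0 ps)"
  by (induction ps) (auto simp: in_K_def Bmult0_def)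

lemma Bprod0_concat_replicate:
  assumes "\<forall>l\<in>set L. k l = k1 l + k2 l"
  shows "Bprod0 (concat (map (\<lambda>l. replicate (k l) (p l)) L)) =
    Bmult0 (Bprod0 (concat (map (\<lambda>l. replicate (k1 l) (p l)) L)))
           (Bprod0 (concat (map (\<lambda>l. replicate (k2 l) (p l)) L)))"
  using assms by (induction L) (simp_all add: Bprod0_append replicate_add Bmult0_ac)

lemma Bprod0_factors:
  assumes "\<forall>i\<le>m. ks ! i = ks1 ! i + ks2 ! i"
  shows "Bprod0 (map g (factors m Tt St ks d)) =
    Bmult0 (Bprod0 (map g (factors m Tt St ks1 d))) (Bprod0 (map g (factors m Tt St ks2 0)))"
proof -
  let ?T = "\<lambda>ks. Bprod0 (concat (map (\<lambda>l. replicate (ks ! l) (g (Tt l))) (rev [1..<m+1])))"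
  let ?X = "\<lambda>k. Bprod0 (replicate k (g (Xv 1)))"
  have "?T ks = Bmult0 (?T ks1) (?T ks2)"
    by (rule Bprod0_concat_replicate) (use assms in auto)
  moreover have "?X (ks ! 0) = Bmult0 (?X (ks1 ! 0)) (?X (ks2 ! 0))"
    using assms by (simp add: replicate_add Bprod0_append)
  ultimately show ?thesis
    by (simp add: factors_def Bprod0_append map_concat comp_def Bmult0_ac del: upt_Suc)
qed

definition one_vector_at_most :: "('k::zero \<times> (nat \<Rightarrow> 'k)) list \<Rightarrow> bool" where
  "one_vector_at_most ps \<longleftrightarrow> length (filter (\<lambda>p. \<not> in_K p) ps) \<le> 1"

lemma one_vector_at_most_append:
  "one_vector_at_most (ps @ qs) \<longleftrightarrow>
     one_vector_at_most ps \<and> one_vector_at_most qs \<and> ((\<forall>p\<in>set ps. in_K p) \<or> (\<forall>q\<in>set qs. in_K q))"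
proof -
  have zero: "length (filter (\<lambda>p. \<not> in_K p) ps) = 0 \<longleftrightarrow> (\<forall>p\<in>set ps. in_K p)"
    for ps :: "('k::zero \<times> (nat \<Rightarrow> 'k)) list"
    by (simp add: filter_empty_conv)
  have split: "a + b \<le> 1 \<longleftrightarrow> a \<le> 1 \<and> b \<le> 1 \<and> (a = 0 \<or> b = 0)" for a b :: nat
    by arith
  show ?thesis
    unfolding one_vector_at_most_def filter_append length_append split zero ..
qed

lemma leaves_pos: "leaves sh \<ge> 1"
  by (induction sh) auto

lemma fill_rest: "leaves sh \<le> length es \<Longrightarrow> snd (fill sh es) = drop (leaves sh) es"
proof (induction sh arbitrary: es)
  case Lf
  then show ?case by (cases es) auto
next
  case (Nd sa sb)
  obtain x r y r' where x: "fill sa es = (x, r)" and y: "fill sb r = (y, r')"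
    by (metis prod.exhaust)
  have "r = drop (leaves sa) es"
    using Nd.IH(1)[of es] Nd.prems leaves_pos[of sb] x by simp
  moreover have "r' = drop (leaves sb) r"
    using Nd.IH(2)[of r] Nd.prems \<open>r = _\<close> y by simp
  ultimately show ?case
    using x y by (simp add: add.commute)
qed

lemma evalB_fill:
  assumes "leaves sh \<le> length es"
    and "one_vector_at_most (map (evalB m F a v) (take (leaves sh) es))"
  shows "evalB m F a v (fst (fill sh es)) = Bprod0 (map (evalB m F a v) (take (leaves sh) es))"
  using assms
proof (induction sh arbitrary: es)
  case Lf
  then show ?case by (cases es) (auto simp: Bmult0_def)
next
  case (Nd sa sb)
  let ?ev = "evalB m F a v"
  obtain x r y r' where x: "fill sa es = (x, r)" and y: "fill sb r = (y, r')"
    by (metis prod.exhaust)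
  have la: "leaves sa \<le> length es"
    using Nd.prems(1) leaves_pos[of sb] by simp
  have r: "r = drop (leaves sa) es"
    using fill_rest[OF la] x by simp
  have lb: "leaves sb \<le> length r"
    using Nd.prems(1) r by simp
  let ?ps = "map ?ev (take (leaves sa) es)" and ?qs = "map ?ev (take (leaves sb) r)"
  have take: "map ?ev (take (leaves (Nd sa sb)) es) = ?ps @ ?qs"
    using r by (simp add: take_add)
  have "one_vector_at_most ?ps" "one_vector_at_most ?qs" and "in_K (Bprod0 ?ps) \<or> in_K (Bprod0 ?qs)"
    using Nd.prems(2) in_K_Bprod0 unfolding take one_vector_at_most_append by blast+
  then have "?ev (fst (fill (Nd sa sb) es)) = Bmult0 (Bprod0 ?ps) (Bprod0 ?qs)"
    using Nd.IH(1)[OF la] Nd.IH(2)[OF lb] x y by (simp add: Bmult_eq_Bmult0)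
  then show ?case
    unfolding take by (simp add: Bprod0_append)
qed

lemma evalB_bracket:
  "leaves sh = length es \<Longrightarrow> one_vector_at_most (map (evalB m F a v) es) \<Longrightarrow>
    evalB m F a v (bracket sh es) = Bprod0 (map (evalB m F a v) es)"
  using evalB_fill[of sh es m F a v] by (simp add: bracket_def)

lemma list_all2_le_hd_tl:
  "xs \<noteq> [] \<Longrightarrow> ys \<noteq> [] \<Longrightarrow>
    list_all2 (\<le>) xs ys \<longleftrightarrow> hd xs \<le> hd ys \<and> list_all2 (\<le>) (tl xs) (tl ys)"
  by (cases xs; cases ys) auto

lemma dickson_finite_basis:
  fixes S :: "nat list set"
  assumes "\<forall>x\<in>S. length x = n"
  shows "\<exists>B\<subseteq>S. finite B \<and> (\<forall>x\<in>S. \<exists>b\<in>B. list_all2 (\<le>) b x)"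
  using assms
proof (induction n arbitrary: S)
  case 0
  then have "S \<subseteq> {[]}" by auto
  then show ?case
    using finite_subset by (intro exI[of _ S]) (auto simp: list_all2_Nil)
next
  case (Suc n)
  have tail_basis: "\<exists>C\<subseteq>T. finite C \<and> (\<forall>x\<in>T. \<exists>c\<in>C. list_all2 (\<le>) (tl c) (tl x))"
    if T: "T \<subseteq> S" for T
  proof -
    have "\<forall>y\<in>tl ` T. length y = n"
      using Suc.prems T by auto
    from Suc.IH[OF this] obtain B
      where "B \<subseteq> tl ` T" "finite B" and B: "\<forall>y\<in>tl ` T. \<exists>b\<in>B. list_all2 (\<le>) b y"
      by blast
    then obtain C where "C \<subseteq> T" "finite C" "B = tl ` C"
      by (meson finite_subset_image)
    moreover have "\<forall>x\<in>T. \<exists>c\<in>C. list_all2 (\<le>) (tl c) (tl x)"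
      using B unfolding \<open>B = tl ` C\<close> by simp
    ultimately show ?thesis by blast
  qed
  have nonempty: "x \<noteq> []" if "x \<in> S" for x
    using Suc.prems that by auto
  have le_by_hd_tl: "list_all2 (\<le>) c x"
    if "c \<in> S" "x \<in> S" "hd c \<le> hd x" "list_all2 (\<le>) (tl c) (tl x)" for c x
    using that nonempty by (simp add: list_all2_le_hd_tl)
  obtain C where C: "C \<subseteq> S" "finite C" and C_tl: "\<forall>x\<in>S. \<exists>c\<in>C. list_all2 (\<le>) (tl c) (tl x)"
    using tail_basis[of S] by blast
  define M where "M = Max (hd ` C)"
  have "\<exists>D. D \<subseteq> {x\<in>S. hd x = h} \<and> finite D \<and>
      (\<forall>x\<in>{x\<in>S. hd x = h}. \<exists>c\<in>D. list_all2 (\<le>) (tl c) (tl x))" for h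
    by (rule tail_basis) auto
  from choice[OF allI[OF this]] obtain D where D: "\<forall>h. D h \<subseteq> {x\<in>S. hd x = h} \<and> finite (D h) \<and>
      (\<forall>x\<in>{x\<in>S. hd x = h}. \<exists>c\<in>D h. list_all2 (\<le>) (tl c) (tl x))" ..
  define B where "B = C \<union> (\<Union>h<M. D h)"
  have "B \<subseteq> S" "finite B"
    unfolding B_def using C D by auto
  moreover have "\<exists>b\<in>B. list_all2 (\<le>) b x" if x: "x \<in> S" for x
  proof (cases "hd x < M")
    case True
    then obtain c where c: "c \<in> D (hd x)" "list_all2 (\<le>) (tl c) (tl x)"
      using D x by blast
    then have "c \<in> B" "c \<in> S" "hd c = hd x"
      using True D unfolding B_def by auto
    then show ?thesis
      using le_by_hd_tl x c(2) by force
  next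
    case False
    then obtain c where c: "c \<in> C" "list_all2 (\<le>) (tl c) (tl x)"
      using C_tl x by blast
    moreover have "hd c \<le> M"
      unfolding M_def using C(2) c(1) by simp
    ultimately show ?thesis
      using False C(1) le_by_hd_tl x unfolding B_def by force
  qed
  ultimately show ?case by blast
qed

lemma dickson_finite_basis_indexed:
  fixes I :: "(nat list \<times> 'd) set"
  assumes "\<forall>(ks, d)\<in>I. length ks = n" and "finite (snd ` I)"
  shows "\<exists>J\<subseteq>I. finite J \<and> (\<forall>(ks, d)\<in>I. \<exists>ks'. (ks', d) \<in> J \<and> list_all2 (\<le>) ks' ks)"
proof -
  have "\<exists>B. B \<subseteq> {ks. (ks, d) \<in> I} \<and> finite B \<and> (\<forall>ks\<in>{ks. (ks, d) \<in> I}. \<exists>b\<in>B. list_all2 (\<le>) b ks)"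
    for d
    by (rule dickson_finite_basis) (use assms(1) in auto)
  from choice[OF allI[OF this]] obtain B where B: "\<forall>d. B d \<subseteq> {ks. (ks, d) \<in> I} \<and> finite (B d) \<and>
      (\<forall>ks\<in>{ks. (ks, d) \<in> I}. \<exists>b\<in>B d. list_all2 (\<le>) b ks)" ..
  define J where "J = (\<Union>d\<in>snd ` I. (\<lambda>ks. (ks, d)) ` B d)"
  have "J \<subseteq> I"
    unfolding J_def using B by auto
  have "finite J"
    unfolding J_def by (rule finite_UN_I[OF assms(2)]) (use B in auto)
  have dominated: "\<exists>ks'. (ks', d) \<in> J \<and> list_all2 (\<le>) ks' ks" if ks: "(ks, d) \<in> I" for ks d
  proof -
    obtain b where b: "b \<in> B d" "list_all2 (\<le>) b ks"
      using B ks by blast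
    have "d \<in> snd ` I"
      using image_eqI[of d snd "(ks, d)"] ks by simp
    then have "(b, d) \<in> J"
      unfolding J_def by (rule UN_I) (rule imageI[OF b(1)])
    with b(2) show ?thesis by blast
  qed
  show ?thesis
    using \<open>J \<subseteq> I\<close> \<open>finite J\<close> dominated by (intro exI[of _ J]) auto
qed

lemma subst_Xv_Yv [simp]: "subst Xv Yv e = e"
  by (induction e) auto

lemma T2cons_mono: "G \<subseteq> H \<Longrightarrow> T2cons m F G \<subseteq> T2cons m F H"
proof
  fix e assume "e \<in> T2cons m F G" and "G \<subseteq> H"
  then show "e \<in> T2cons m F H"
    by (induction rule: T2cons.induct) (auto intro: T2cons.intros)
qed

lemma generator_in_T2cons: "g \<in> G \<Longrightarrow> g \<in> T2cons m F G"
  using T2cons.gen[of g G Xv Yv] by (simp add: hom.intros)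

lemma foldl_Mult_in_T2cons: "e \<in> T2cons m F G \<Longrightarrow> foldl Mult e es \<in> T2cons m F G"
  by (induction es arbitrary: e) (auto intro: T2cons.multl)

lemma T2cons_evalB_cong:
  assumes "e \<in> T2cons m F G"
    and "\<And>a v. \<forall>i. v i \<in> Vsp m \<Longrightarrow> evalB m F a v q = evalB m F a v e"
  shows "q \<in> T2cons m F G"
proof (rule T2cons.resp[OF assms(1)])
  have "Add q (Smul (-1) e) \<in> Id2 m F"
    using assms(2) by (simp add: Id2_def Let_def)
  then show "Add q (Smul (-1) e) \<in> T2cons m F G"
    by (rule T2cons.id2)
qed

lemma evalB_foldl_Mult:
  "\<forall>e'\<in>set es. in_K (evalB m F a v e') \<Longrightarrow>
    evalB m F a v (foldl Mult e es) = Bmult0 (evalB m F a v e) (Bprod0 (map (evalB m F a v) es))"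
  by (induction es arbitrary: e) (simp_all add: Bmult_eq_Bmult0 Bmult0_assoc)

lemma in_K_evalB_if_represents_Tval:
  "represents m F p (Tval m F k) \<Longrightarrow> \<forall>i. v i \<in> Vsp m \<Longrightarrow> in_K (evalB m F a v p)"
  by (simp add: represents_def Tval_def in_K_def)

lemma in_K_evalB_factors_0:
  assumes "\<And>l. l \<in> {1..m} \<Longrightarrow> in_K (evalB m F a v (Tt l))"
  shows "\<forall>e\<in>set (factors m Tt St ks 0). in_K (evalB m F a v e)"
  using assms by (auto simp: factors_def in_K_def)

lemma one_vector_at_most_factors:
  assumes "\<And>l. l \<in> {1..m} \<Longrightarrow> in_K (evalB m F a v (Tt l))"
  shows "one_vector_at_most (map (evalB m F a v) (factors m Tt St ks d))"
proof -
  let ?nonK = "filter (\<lambda>e. \<not> in_K (evalB m F a v e))"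
  have "?nonK (replicate (ks ! 0) (Xv 1) @ concat (map (\<lambda>l. replicate (ks ! l) (Tt l)) (rev [1..<m+1]))) = []"
    using in_K_evalB_factors_0[where St=St and ks=ks, OF assms]
    by (simp only: filter_empty_conv) (simp add: factors_def)
  then have "?nonK (factors m Tt St ks d) = ?nonK (if d \<ge> 1 then [St d] else [])"
    by (simp add: factors_def del: upt_Suc)
  then show ?thesis
    by (simp add: one_vector_at_most_def filter_map comp_def)
qed

text \<open>The difference kd of the exponent vectors contributes factors with values in K, and
  multiplying by them commutes with every bracketing.\<close>
lemma bracket_factors_in_T2cons_of_le:
  assumes scalar_T: "\<And>l a v. l \<in> {1..m} \<Longrightarrow> \<forall>i. v i \<in> Vsp m \<Longrightarrow> in_K (evalB m F a v (Tt l))"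
    and sh1: "leaves sh1 = length (factors m Tt St ks1 d)"
    and sh2: "leaves sh2 = length (factors m Tt St ks2 d)"
    and len: "length ks1 = m + 1" and le: "list_all2 (\<le>) ks1 ks2"
  shows "bracket sh2 (factors m Tt St ks2 d) \<in> T2cons m F {bracket sh1 (factors m Tt St ks1 d)}"
proof -
  define p where "p = bracket sh1 (factors m Tt St ks1 d)"
  define kd where "kd = map (\<lambda>i. ks2 ! i - ks1 ! i) [0..<m+1]"
  have ks2: "\<forall>i\<le>m. ks2 ! i = ks1 ! i + kd ! i"
    using le len by (auto simp: kd_def list_all2_conv_all_nth simp del: upt_Suc)
  have eval_eq: "evalB m F a v (bracket sh2 (factors m Tt St ks2 d)) =
      evalB m F a v (foldl Mult p (factors m Tt St kd 0))" if v: "\<forall>i. v i \<in> Vsp m" for a v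
  proof -
    let ?ev = "evalB m F a v"
    have scalar: "\<And>l. l \<in> {1..m} \<Longrightarrow> in_K (?ev (Tt l))"
      using scalar_T v by blast
    have "?ev (bracket sh2 (factors m Tt St ks2 d)) = Bprod0 (map ?ev (factors m Tt St ks2 d))"
      by (rule evalB_bracket[OF sh2 one_vector_at_most_factors[OF scalar]])
    also have "\<dots> = Bmult0 (Bprod0 (map ?ev (factors m Tt St ks1 d))) (Bprod0 (map ?ev (factors m Tt St kd 0)))"
      by (rule Bprod0_factors[OF ks2])
    also have "Bprod0 (map ?ev (factors m Tt St ks1 d)) = ?ev p"
      unfolding p_def by (rule evalB_bracket[OF sh1 one_vector_at_most_factors[OF scalar], symmetric])
    also have "Bmult0 (?ev p) (Bprod0 (map ?ev (factors m Tt St kd 0))) = ?ev (foldl Mult p (factors m Tt St kd 0))"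
      by (rule evalB_foldl_Mult[OF in_K_evalB_factors_0[OF scalar], symmetric])
    finally show ?thesis .
  qed
  have "foldl Mult p (factors m Tt St kd 0) \<in> T2cons m F {p}"
    by (intro foldl_Mult_in_T2cons generator_in_T2cons) simp
  then have "bracket sh2 (factors m Tt St ks2 d) \<in> T2cons m F {p}"
    by (rule T2cons_evalB_cong) (rule eval_eq)
  then show ?thesis
    by (simp add: p_def)
qed

theorem lemma4p4:
  fixes m :: nat and F :: "nat \<Rightarrow> nat \<Rightarrow> 'k::field_char_0"
    and Tt St :: "nat \<Rightarrow> 'k expr" and shp :: "nat list \<times> nat \<Rightarrow> shape"
  assumes "m > 1"
    and "nondeg_symm m F"
    and "\<And>k. k \<in> {1..m} \<Longrightarrow> represents m F (Tt k) (Tval m F k)"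
    and "\<And>k. k \<in> {1..m} \<Longrightarrow> represents m F (St k) (Sval m F k)"
    and "\<And>ks d. length ks = m + 1 \<Longrightarrow> d \<le> m \<Longrightarrow> factors m Tt St ks d \<noteq> [] \<Longrightarrow>
         leaves (shp (ks, d)) = length (factors m Tt St ks d)"
  shows "\<forall>S \<subseteq> Pset m Tt St shp. \<exists>S' \<subseteq> S. finite S' \<and> S \<subseteq> T2cons m F S'"
proof (intro allI impI)
  fix S assume S: "S \<subseteq> Pset m Tt St shp"
  define P where "P = (\<lambda>(ks, d). bracket (shp (ks, d)) (factors m Tt St ks d))"
  define I where "I = {(ks, d). length ks = m + 1 \<and> d \<le> m \<and> factors m Tt St ks d \<noteq> [] \<and> P (ks, d) \<in> S}"
  have S_eq: "S = P ` I"
    using S unfolding Pset_def I_def P_def by fastforce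
  have "finite (snd ` I)"
    by (rule finite_subset[of _ "{..m}"]) (auto simp: I_def)
  then obtain J where "J \<subseteq> I" "finite J" and J: "\<forall>(ks, d)\<in>I. \<exists>ks'. (ks', d) \<in> J \<and> list_all2 (\<le>) ks' ks"
    using dickson_finite_basis_indexed[of I "m + 1"] by (auto simp: I_def)
  have scalar_T: "in_K (evalB m F a v (Tt l))" if "l \<in> {1..m}" "\<forall>i. v i \<in> Vsp m" for l a v
    using in_K_evalB_if_represents_Tval[OF assms(3)] that by blast
  have "P (ks, d) \<in> T2cons m F {P (ks', d)}"
    if "(ks, d) \<in> I" "(ks', d) \<in> I" "list_all2 (\<le>) ks' ks" for ks ks' d
    unfolding P_def split using that
    by (intro bracket_factors_in_T2cons_of_le[OF scalar_T] assms(5)) (simp_all add: I_def)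
  then have "P (ks, d) \<in> T2cons m F (P ` J)" if "(ks, d) \<in> I" for ks d
    using J that \<open>J \<subseteq> I\<close> T2cons_mono[of "{_}" "P ` J"] by blast
  then have "S \<subseteq> T2cons m F (P ` J)"
    unfolding S_eq by (intro image_subsetI) (metis prod.collapse)
  moreover have "P ` J \<subseteq> S"
    unfolding S_eq using \<open>J \<subseteq> I\<close> by (rule image_mono)
  ultimately show "\<exists>S' \<subseteq> S. finite S' \<and> S \<subseteq> T2cons m F S'"
    using \<open>finite J\<close> by (intro exI[of _ "P ` J"]) simp
qed

end
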